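(* Let $X_1,X_2$ be infinite dimensional Hilbert spaces, $D_1\in\mathcal{B}(X_1)$, $D_2\in\mathcal{B}(X_2)$. Then for every $C\in\mathcal{B}(X_2,X_1)$, writing $M_C=\begin{bmatrix}D_1&C\\0&D_2\end{bmatrix}\in\mathcal{B}(X_1\oplus X_2)$, $$\sigma(D_1)\cup\sigma(D_2)=\sigma(M_C)\cup\big\{\lambda\in\mathbb{C}:\ 0<\beta(D_1-\lambda)\le\alpha(D_2-\lambda)\ \text{or}\ 0<\alpha(D_2-\lambda)\le\beta(D_1-\lambda)\big\}.$$ In particular, if the set $\{\lambda:\ 0<\beta(D_1-\lambda)\le\alpha(D_2-\lambda)$ or $0<\alpha(D_2-\lambda)\le\beta(D_1-\lambda)\}$ is empty, then $\sigma(D_1)\cup\sigma(D_2)=\sigma(M_C)$ for every $C$.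
   Context: For a bounded operator $T$, $\alpha(T)=\dim\mathcal{N}(T)$, $\beta(T)=\operatorname{codim}\mathcal{R}(T)$, values in $\{0,1,\dots\}\cup\{\infty\}$ (comparisons in this extended set). $\sigma(T)$ is the set of $\lambda\in\mathbb{C}$ such that $\lambda-T$ is not invertible. *)

theory Defs
  imports "HOL-Analysis.Analysis" "HOL-Library.Extended_Nat"
begin

text \<open>The distribution has no complex vector spaces, so we introduce them as a type class
  over real vector spaces (the real scalar multiplication being the restriction of the
  complex one).\<close>

class complex_vector = real_vector +
  fixes scaleC :: "complex \<Rightarrow> 'a \<Rightarrow> 'a" (infixr "*\<^sub>C" 75)
  assumes scaleC_add_right: "scaleC a (x + y) = scaleC a x + scaleC a y"
    and scaleC_add_left: "scaleC (a + b) x = scaleC a x + scaleC b x"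
    and scaleC_scaleC: "scaleC a (scaleC b x) = scaleC (a * b) x"
    and scaleC_one: "scaleC 1 x = x"
    and scaleR_scaleC: "scaleR r x = scaleC (complex_of_real r) x"

class chilbert_space = complex_vector + banach +
  fixes cinner :: "'a \<Rightarrow> 'a \<Rightarrow> complex"
  assumes cinner_add_left: "cinner (x + y) z = cinner x z + cinner y z"
    and cinner_scaleC_left: "cinner (scaleC c x) y = cnj c * cinner x y"
    and cinner_commute: "cinner x y = cnj (cinner y x)"
    and cinner_ge_zero: "0 \<le> Re (cinner x x)"
    and cinner_eq_zero_iff: "cinner x x = 0 \<longleftrightarrow> x = 0"
    and norm_eq_sqrt_cinner: "norm x = sqrt (Re (cinner x x))"

text \<open>The direct sum X1 \<oplus> X2 is the product type (with HOL's product norm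
  sqrt(norm x^2 + norm y^2), i.e. the Hilbert direct sum norm).\<close>

instantiation prod :: (complex_vector, complex_vector) complex_vector
begin
definition scaleC_prod_def: "scaleC c p = (scaleC c (fst p), scaleC c (snd p))"
instance
  by standard (auto simp: scaleC_prod_def scaleC_add_right scaleC_add_left scaleC_scaleC
      scaleC_one scaleR_prod_def scaleR_scaleC)
end

definition clinear :: "('a::complex_vector \<Rightarrow> 'b::complex_vector) \<Rightarrow> bool" where
  "clinear f \<longleftrightarrow> (\<forall>x y. f (x + y) = f x + f y) \<and> (\<forall>c x. f (scaleC c x) = scaleC c (f x))"

definition bounded_clinear ::
  "('a::{complex_vector,real_normed_vector} \<Rightarrow> 'b::{complex_vector,real_normed_vector}) \<Rightarrow> bool" where
  "bounded_clinear f \<longleftrightarrow> clinear f \<and> (\<exists>K. \<forall>x. norm (f x) \<le> norm x * K)"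

definition invertible_op :: "('a::{complex_vector,real_normed_vector} \<Rightarrow> 'a) \<Rightarrow> bool" where
  "invertible_op T \<longleftrightarrow> bounded_clinear T \<and>
     (\<exists>S. bounded_clinear S \<and> S \<circ> T = id \<and> T \<circ> S = id)"

definition spectrum :: "('a::{complex_vector,real_normed_vector} \<Rightarrow> 'a) \<Rightarrow> complex set" where
  "spectrum T = {l. \<not> invertible_op (\<lambda>x. scaleC l x - T x)}"

text \<open>A finite set S is linearly independent modulo W if no nontrivial complex linear
  combination of S lies in W (i.e. its image in the quotient by W is independent).\<close>
definition indep_mod :: "'a::complex_vector set \<Rightarrow> 'a set \<Rightarrow> bool" where
  "indep_mod W S \<longleftrightarrow> finite S \<and>
     (\<forall>u. (\<Sum>x\<in>S. scaleC (u x) x) \<in> W \<longrightarrow> (\<forall>x\<in>S. u x = 0))"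

text \<open>dim_mod W V: dimension of (V + W)/W, in {0,1,...} \<union> {\<infinity>}.
  dim V = dim_mod {0} V and codim W = dim_mod W UNIV.\<close>
definition dim_mod :: "'a::complex_vector set \<Rightarrow> 'a set \<Rightarrow> enat" where
  "dim_mod W V = Sup {enat (card S) | S. S \<subseteq> V \<and> indep_mod W S}"

definition cdim :: "'a::complex_vector set \<Rightarrow> enat" where
  "cdim V = dim_mod {0} V"

definition codim :: "'a::complex_vector set \<Rightarrow> enat" where
  "codim W = dim_mod W UNIV"

definition nullity :: "('a::complex_vector \<Rightarrow> 'b::complex_vector) \<Rightarrow> enat" where
  "nullity T = cdim {x. T x = 0}"

definition defect :: "('a::complex_vector \<Rightarrow> 'b::complex_vector) \<Rightarrow> enat" where
  "defect T = codim (range T)"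

definition upper_tri :: "('a \<Rightarrow> 'a) \<Rightarrow> ('b \<Rightarrow> 'a) \<Rightarrow> ('b \<Rightarrow> 'b) \<Rightarrow> ('a::plus \<times> 'b \<Rightarrow> 'a \<times> 'b)" where
  "upper_tri D1 C D2 = (\<lambda>(x, y). (D1 x + C y, D2 y))"

end

theory Submission
  imports Defs
begin

(* Fix \<lambda> and put A = \<lambda> - D1, B = \<lambda> - D2, so that \<lambda> - M_C is the upper triangular
   matrix with diagonal A, B and corner -C.  If A and B are invertible, so is the matrix, and
   \<beta>(A) = \<alpha>(B) = 0.  Conversely, let the matrix be invertible with inverse S.  The map
   v \<mapsto> snd (S (v, 0)) sends X1 into ker B and vanishes exactly on range A, so \<beta>(A) \<le> \<alpha>(B).
   If \<beta>(A) = 0 then A is onto; then A x = - C y is solvable for every y, which makes B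
   injective, and both A and B turn out to be invertible.  So if A or B is not invertible while
   the matrix is, then 0 < \<beta>(A) \<le> \<alpha>(B).  No dimension hypothesis is needed. *)

lemma scaleC_zero_left [simp]: "0 *\<^sub>C (x::'a::complex_vector) = 0"
  by (metis scaleR_scaleC of_real_0 scaleR_zero_left)

lemma scaleC_zero_right [simp]: "c *\<^sub>C (0::'a::complex_vector) = 0"
  by (metis add_cancel_right_right scaleC_add_right add_0)

lemma scaleC_minus_left: "(- c) *\<^sub>C (x::'a::complex_vector) = - (c *\<^sub>C x)"
  by (metis add.right_inverse scaleC_add_left scaleC_zero_left eq_neg_iff_add_eq_0)

lemma scaleC_minus_right: "c *\<^sub>C (- x::'a::complex_vector) = - (c *\<^sub>C x)"
  by (metis add.right_inverse scaleC_add_right scaleC_zero_right eq_neg_iff_add_eq_0)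

lemma scaleC_left_commute: "a *\<^sub>C (b *\<^sub>C (x::'a::complex_vector)) = b *\<^sub>C (a *\<^sub>C x)"
  by (simp add: scaleC_scaleC mult.commute)

lemma norm_scaleC: "norm (c *\<^sub>C (x::'a::chilbert_space)) = cmod c * norm x"
proof -
  have real_cinner: "cnj (cinner x x) = cinner x x"
    by (metis cinner_commute)
  have "cinner (c *\<^sub>C x) (c *\<^sub>C x) = cnj c * cnj (cinner (c *\<^sub>C x) x)"
    by (metis cinner_scaleC_left cinner_commute)
  also have "\<dots> = cnj c * c * cinner x x"
    by (simp add: cinner_scaleC_left real_cinner)
  also have "\<dots> = of_real ((cmod c)\<^sup>2) * cinner x x"
    using complex_norm_square[of c] by (simp only: mult.commute)
  finally have "Re (cinner (c *\<^sub>C x) (c *\<^sub>C x)) = (cmod c)\<^sup>2 * Re (cinner x x)"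
    by simp
  then show ?thesis
    by (simp only: norm_eq_sqrt_cinner real_sqrt_mult real_sqrt_abs abs_norm_cancel)
qed

lemma clinear_add: "clinear f \<Longrightarrow> f (x + y) = f x + f y"
  unfolding clinear_def by blast

lemma clinear_scaleC: "clinear f \<Longrightarrow> f (c *\<^sub>C x) = c *\<^sub>C f x"
  unfolding clinear_def by blast

lemma clinear_zero: "clinear f \<Longrightarrow> f 0 = 0"
  unfolding clinear_def by (metis add_cancel_right_right add_0)

lemma clinear_minus: "clinear f \<Longrightarrow> f (- x) = - f x"
  using clinear_add[of f x "- x"] clinear_zero[of f] by (simp add: eq_neg_iff_add_eq_0 add.commute)

lemma clinear_diff: "clinear f \<Longrightarrow> f (x - y) = f x - f y"
  using clinear_add[of f x "- y"] clinear_minus[of f y] by simp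

lemma clinear_sum:
  assumes "clinear f"
  shows "f (sum g S) = (\<Sum>x\<in>S. f (g x))"
  by (induction S rule: infinite_finite_induct)
    (simp_all add: clinear_zero[OF assms] clinear_add[OF assms])

lemma bounded_clinear_iff: "bounded_clinear f \<longleftrightarrow> clinear f \<and> bounded_linear f"
proof
  assume "bounded_clinear f"
  then obtain K where f: "clinear f" and "\<forall>x. norm (f x) \<le> norm x * K"
    unfolding bounded_clinear_def by blast
  then show "clinear f \<and> bounded_linear f"
    by (auto intro!: bounded_linear_intro[where K=K]
        simp: clinear_add[OF f] clinear_scaleC[OF f] scaleR_scaleC)
next
  assume "clinear f \<and> bounded_linear f"
  then show "bounded_clinear f"
    unfolding bounded_clinear_def using bounded_linear.bounded by blast
qed

lemma bounded_clinear_clinear: "bounded_clinear f \<Longrightarrow> clinear f"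
  unfolding bounded_clinear_def by blast

lemma bounded_clinear_compose:
  assumes "bounded_clinear f" "bounded_clinear g"
  shows "bounded_clinear (\<lambda>x. f (g x))"
proof -
  have "clinear f" "clinear g" "bounded_linear f" "bounded_linear g"
    using assms by (simp_all add: bounded_clinear_iff)
  then show ?thesis
    by (simp add: bounded_clinear_iff bounded_linear_compose clinear_def)
qed

lemma bounded_clinear_add:
  assumes "bounded_clinear f" "bounded_clinear g"
  shows "bounded_clinear (\<lambda>x. f x + g x)"
proof -
  have "clinear f" "clinear g" "bounded_linear f" "bounded_linear g"
    using assms by (simp_all add: bounded_clinear_iff)
  then show ?thesis
    by (simp add: bounded_clinear_iff bounded_linear_add clinear_def clinear_add[OF \<open>clinear f\<close>]
        clinear_add[OF \<open>clinear g\<close>] clinear_scaleC[OF \<open>clinear f\<close>]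
        clinear_scaleC[OF \<open>clinear g\<close>] scaleC_add_right add_ac)
qed

lemma bounded_clinear_minus:
  assumes "bounded_clinear f"
  shows "bounded_clinear (\<lambda>x. - f x)"
proof -
  have "clinear f" "bounded_linear f"
    using assms by (simp_all add: bounded_clinear_iff)
  then show ?thesis
    by (simp add: bounded_clinear_iff bounded_linear_minus clinear_def clinear_add[OF \<open>clinear f\<close>]
        clinear_scaleC[OF \<open>clinear f\<close>] scaleC_minus_right)
qed

lemma bounded_clinear_diff:
  "bounded_clinear f \<Longrightarrow> bounded_clinear g \<Longrightarrow> bounded_clinear (\<lambda>x. f x - g x)"
  using bounded_clinear_add[of f "\<lambda>x. - g x"] bounded_clinear_minus[of g] by simp

lemma bounded_clinear_ident: "bounded_clinear (\<lambda>x. x)"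
  by (simp add: bounded_clinear_iff clinear_def)

lemma bounded_clinear_zero: "bounded_clinear (\<lambda>x. 0)"
  by (simp add: bounded_clinear_iff clinear_def)

lemma bounded_clinear_fst: "bounded_clinear fst"
  by (simp add: bounded_clinear_iff clinear_def scaleC_prod_def bounded_linear_fst)

lemma bounded_clinear_snd: "bounded_clinear snd"
  by (simp add: bounded_clinear_iff clinear_def scaleC_prod_def bounded_linear_snd)

lemma bounded_clinear_Pair:
  "bounded_clinear f \<Longrightarrow> bounded_clinear g \<Longrightarrow> bounded_clinear (\<lambda>x. (f x, g x))"
  by (simp add: bounded_clinear_iff bounded_linear_Pair clinear_def scaleC_prod_def)

lemma bounded_clinear_Pair_zero: "bounded_clinear (\<lambda>x. (x, 0))"
  by (simp add: bounded_clinear_Pair bounded_clinear_ident bounded_clinear_zero)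

lemma bounded_clinear_zero_Pair: "bounded_clinear (\<lambda>x. (0, x))"
  by (simp add: bounded_clinear_Pair bounded_clinear_ident bounded_clinear_zero)

lemma bounded_clinear_scaleC: "bounded_clinear (\<lambda>x::'a::chilbert_space. c *\<^sub>C x)"
  unfolding bounded_clinear_def clinear_def
  by (intro conjI allI exI[of _ "cmod c"])
    (simp_all add: scaleC_add_right scaleC_left_commute norm_scaleC mult.commute)

lemma invertible_opI:
  assumes "bounded_clinear T" "bounded_clinear S" "\<And>x. S (T x) = x" "\<And>y. T (S y) = y"
  shows "invertible_op T"
  using assms unfolding invertible_op_def by (auto simp: fun_eq_iff)

lemma invertible_opE:
  assumes "invertible_op T"
  obtains S where "bounded_clinear T" "bounded_clinear S" "\<And>x. S (T x) = x" "\<And>y. T (S y) = y"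
  using assms unfolding invertible_op_def by (metis comp_apply id_apply)

lemma invertible_op_surj: "invertible_op T \<Longrightarrow> surj T"
  by (elim invertible_opE) (metis surjI)

lemma invertible_op_inj: "invertible_op T \<Longrightarrow> inj T"
  by (elim invertible_opE) (metis injI)

lemma invertible_op_if_left_inverse_surj:
  assumes "bounded_clinear T" "bounded_clinear S" "\<And>x. S (T x) = x" "surj T"
  shows "invertible_op T"
proof (rule invertible_opI[OF assms(1-3)])
  fix y
  obtain x where "y = T x"
    using \<open>surj T\<close> by (metis surjD)
  then show "T (S y) = y"
    using assms(3) by simp
qed

lemma invertible_op_if_right_inverse_inj:
  assumes "bounded_clinear T" "bounded_clinear S" "\<And>y. T (S y) = y" "inj T"
  shows "invertible_op T"
  using assms by (intro invertible_opI[of T S]) (auto dest: injD)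

lemma dim_mod_eq_0:
  assumes "V \<subseteq> W"
  shows "dim_mod W V = 0"
proof -
  have empty: "S = {}" if "S \<subseteq> V" "indep_mod W S" for S
  proof (rule ccontr)
    assume "S \<noteq> {}"
    then obtain a where a: "a \<in> S" by blast
    define u where "u x = (if x = a then 1 else 0 :: complex)" for x :: 'a
    have "finite S" using that(2) unfolding indep_mod_def by blast
    have "(\<Sum>x\<in>S. u x *\<^sub>C x) = (\<Sum>x\<in>S. if x = a then x else 0)"
      by (rule sum.cong) (auto simp: u_def scaleC_one)
    also have "\<dots> = a"
      using \<open>finite S\<close> a by simp
    finally have "(\<Sum>x\<in>S. u x *\<^sub>C x) \<in> W"
      using a that(1) assms by auto
    then have "u a = 0"
      using that(2) a unfolding indep_mod_def by blast
    then show False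
      by (simp add: u_def)
  qed
  then have "dim_mod W V \<le> 0"
    unfolding dim_mod_def by (auto simp: zero_enat_def dest!: empty intro!: Sup_least)
  then show ?thesis
    by simp
qed

lemma dim_mod_pos:
  assumes "v \<in> V" "v \<notin> W" and scaleC_closed: "\<And>c w. w \<in> W \<Longrightarrow> c *\<^sub>C w \<in> W"
  shows "0 < dim_mod W V"
proof -
  have "indep_mod W {v}"
    unfolding indep_mod_def
  proof (intro conjI allI impI ballI)
    fix u x assume "(\<Sum>x\<in>{v}. u x *\<^sub>C x) \<in> W" "x \<in> {v}"
    then show "u x = 0"
      using scaleC_closed[of "u v *\<^sub>C v" "inverse (u v)"] \<open>v \<notin> W\<close>
      by (cases "u v = 0") (auto simp: scaleC_scaleC scaleC_one)
  qed simp
  then have "enat (card {v}) \<le> dim_mod W V"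
    unfolding dim_mod_def using \<open>v \<in> V\<close> by (intro Sup_upper) blast
  then have "1 \<le> dim_mod W V"
    by (simp add: one_enat_def)
  then show ?thesis
    using zero_less_one less_le_trans by blast
qed

lemma inj_on_if_indep_mod:
  assumes \<phi>: "clinear \<phi>" and "0 \<in> W'" and reflects: "\<And>w. \<phi> w \<in> W' \<Longrightarrow> w \<in> W"
    and S: "indep_mod W S"
  shows "inj_on \<phi> S"
proof (rule inj_onI, rule ccontr)
  fix a b assume a: "a \<in> S" and b: "b \<in> S" and "\<phi> a = \<phi> b" and "a \<noteq> b"
  define u where "u x = (if x = a then 1 else if x = b then -1 else 0 :: complex)" for x :: 'a
  have "finite S"
    using S unfolding indep_mod_def by blast
  have "(\<Sum>x\<in>S. u x *\<^sub>C x) = (\<Sum>x\<in>S. (if x = a then x else 0) - (if x = b then x else 0))"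
    by (rule sum.cong) (use \<open>a \<noteq> b\<close> in \<open>auto simp: u_def scaleC_one scaleC_minus_left\<close>)
  also have "\<dots> = a - b"
    using \<open>finite S\<close> a b by (simp add: sum_subtractf sum.delta)
  finally have "(\<Sum>x\<in>S. u x *\<^sub>C x) \<in> W"
    using \<open>\<phi> a = \<phi> b\<close> \<open>0 \<in> W'\<close> by (intro reflects) (simp add: clinear_diff[OF \<phi>])
  then show False
    using S a unfolding indep_mod_def u_def by fastforce
qed

lemma indep_mod_image:
  assumes \<phi>: "clinear \<phi>" and reflects: "\<And>w. \<phi> w \<in> W' \<Longrightarrow> w \<in> W"
    and S: "indep_mod W S" and inj: "inj_on \<phi> S"
  shows "indep_mod W' (\<phi> ` S)"
  unfolding indep_mod_def
proof (intro conjI allI impI ballI)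
  show "finite (\<phi> ` S)"
    using S unfolding indep_mod_def by blast
  fix u y assume "(\<Sum>y\<in>\<phi> ` S. u y *\<^sub>C y) \<in> W'" and y: "y \<in> \<phi> ` S"
  then have "\<phi> (\<Sum>x\<in>S. u (\<phi> x) *\<^sub>C x) \<in> W'"
    by (simp add: sum.reindex[OF inj] clinear_sum[OF \<phi>] clinear_scaleC[OF \<phi>])
  then have "(\<Sum>x\<in>S. u (\<phi> x) *\<^sub>C x) \<in> W"
    by (rule reflects)
  then have "\<forall>x\<in>S. u (\<phi> x) = 0"
    using S unfolding indep_mod_def by (elim conjE allE[of _ "\<lambda>x. u (\<phi> x)"]) blast
  then show "u y = 0"
    using y by blast
qed

lemma dim_mod_le_if_linear_reflects:
  assumes \<phi>: "clinear \<phi>" and "0 \<in> W'" and reflects: "\<And>w. \<phi> w \<in> W' \<Longrightarrow> w \<in> W"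
    and "\<phi> ` V \<subseteq> V'"
  shows "dim_mod W V \<le> dim_mod W' V'"
  unfolding dim_mod_def
proof (rule Sup_mono)
  fix e assume "e \<in> {enat (card S) |S. S \<subseteq> V \<and> indep_mod W S}"
  then obtain S where e: "e = enat (card S)" and "S \<subseteq> V" and S: "indep_mod W S"
    by blast
  have inj: "inj_on \<phi> S"
    using \<phi> \<open>0 \<in> W'\<close> reflects S by (rule inj_on_if_indep_mod)
  have "indep_mod W' (\<phi> ` S)"
    using \<phi> reflects S inj by (rule indep_mod_image)
  moreover have "\<phi> ` S \<subseteq> V'"
    using \<open>S \<subseteq> V\<close> \<open>\<phi> ` V \<subseteq> V'\<close> by blast
  ultimately have "enat (card (\<phi> ` S)) \<in> {enat (card S) |S. S \<subseteq> V' \<and> indep_mod W' S}"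
    by blast
  moreover have "e = enat (card (\<phi> ` S))"
    using e card_image[OF inj] by simp
  ultimately show "\<exists>b\<in>{enat (card S) |S. S \<subseteq> V' \<and> indep_mod W' S}. e \<le> b"
    by blast
qed

lemma defect_eq_0_if_surj: "surj T \<Longrightarrow> defect T = 0"
  unfolding defect_def codim_def by (simp add: dim_mod_eq_0)

lemma nullity_eq_0_if_inj:
  assumes "clinear T" "inj T"
  shows "nullity T = 0"
  unfolding nullity_def cdim_def
  by (rule dim_mod_eq_0) (use injD[OF assms(2), of _ 0] clinear_zero[OF assms(1)] in auto)

lemma defect_pos_if_not_surj:
  assumes "clinear T" "\<not> surj T"
  shows "0 < defect T"
proof -
  obtain v where "v \<notin> range T"
    using \<open>\<not> surj T\<close> by blast
  moreover have "c *\<^sub>C w \<in> range T" if "w \<in> range T" for c w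
    using that clinear_scaleC[OF \<open>clinear T\<close>] by (metis rangeE rangeI)
  ultimately show ?thesis
    unfolding defect_def codim_def by (intro dim_mod_pos[of v]) auto
qed

lemma defect_uminus:
  assumes "clinear T"
  shows "defect (\<lambda>x. - T x) = defect T"
proof -
  have "range (\<lambda>x. - T x) = T ` range uminus"
    by (simp only: image_image clinear_minus[OF assms])
  then show ?thesis
    unfolding defect_def by simp
qed

lemma nullity_uminus: "nullity (\<lambda>x. - T x) = nullity T"
  unfolding nullity_def by simp

lemma upper_tri_apply [simp]: "upper_tri A C B (x, y) = (A x + C y, B y)"
  by (simp add: upper_tri_def)

lemma fst_upper_tri [simp]: "fst (upper_tri A C B p) = A (fst p) + C (snd p)"
  by (simp add: upper_tri_def case_prod_unfold)

lemma snd_upper_tri [simp]: "snd (upper_tri A C B p) = B (snd p)"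
  by (simp add: upper_tri_def case_prod_unfold)

lemma upper_tri_eq: "upper_tri A C B = (\<lambda>p. (A (fst p) + C (snd p), B (snd p)))"
  by (simp add: upper_tri_def case_prod_unfold)

lemma bounded_clinear_upper_tri:
  assumes "bounded_clinear A" "bounded_clinear B" "bounded_clinear C"
  shows "bounded_clinear (upper_tri A C B)"
  unfolding upper_tri_eq
  by (intro bounded_clinear_Pair bounded_clinear_add bounded_clinear_fst bounded_clinear_snd
      bounded_clinear_compose[OF assms(1)] bounded_clinear_compose[OF assms(2)]
      bounded_clinear_compose[OF assms(3)])

lemma invertible_op_upper_tri:
  assumes A: "invertible_op A" and B: "invertible_op B" and "bounded_clinear C"
  shows "invertible_op (upper_tri A C B)"
proof -
  obtain SA where "bounded_clinear A" "bounded_clinear SA"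
    and SA: "\<And>x. SA (A x) = x" "\<And>y. A (SA y) = y"
    using A by (elim invertible_opE) blast
  obtain SB where "bounded_clinear B" "bounded_clinear SB"
    and SB: "\<And>x. SB (B x) = x" "\<And>y. B (SB y) = y"
    using B by (elim invertible_opE) blast
  define S where "S p = (SA (fst p - C (SB (snd p))), SB (snd p))" for p
  have "bounded_clinear S"
    unfolding S_def[abs_def]
    by (intro bounded_clinear_Pair bounded_clinear_diff bounded_clinear_fst bounded_clinear_snd
        bounded_clinear_compose[OF \<open>bounded_clinear SA\<close>]
        bounded_clinear_compose[OF \<open>bounded_clinear SB\<close>]
        bounded_clinear_compose[OF \<open>bounded_clinear C\<close>])
  then show ?thesis
    using \<open>bounded_clinear A\<close> \<open>bounded_clinear B\<close> \<open>bounded_clinear C\<close>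
    by (intro invertible_opI[of _ S] bounded_clinear_upper_tri) (auto simp: S_def SA SB)
qed

lemma invertible_op_diagonal_if_surj:
  assumes M: "invertible_op (upper_tri A C B)" and "surj A"
    and "bounded_clinear A" "bounded_clinear B" "bounded_clinear C"
  shows "invertible_op A \<and> invertible_op B"
proof -
  obtain S where "bounded_clinear S"
    and S: "\<And>p. S (upper_tri A C B p) = p" "\<And>p. upper_tri A C B (S p) = p"
    using M by (elim invertible_opE) blast
  have "clinear A" "clinear B" "clinear C"
    using assms by (simp_all add: bounded_clinear_clinear)
  have "invertible_op A"
  proof (rule invertible_op_if_left_inverse_surj[of A "\<lambda>z. fst (S (z, 0))"])
    show "bounded_clinear (\<lambda>z. fst (S (z, 0)))"
      by (intro bounded_clinear_compose[OF bounded_clinear_fst]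
          bounded_clinear_compose[OF \<open>bounded_clinear S\<close>] bounded_clinear_Pair_zero)
    show "fst (S (A x, 0)) = x" for x
      using S(1)[of "(x, 0)"]
      by (simp add: clinear_zero[OF \<open>clinear B\<close>] clinear_zero[OF \<open>clinear C\<close>])
  qed fact+
  moreover have "invertible_op B"
  proof (rule invertible_op_if_right_inverse_inj[of B "\<lambda>z. snd (S (0, z))"])
    show "bounded_clinear (\<lambda>z. snd (S (0, z)))"
      by (intro bounded_clinear_compose[OF bounded_clinear_snd]
          bounded_clinear_compose[OF \<open>bounded_clinear S\<close>] bounded_clinear_zero_Pair)
    show "B (snd (S (0, z))) = z" for z
      using arg_cong[where f = snd, OF S(2)[of "(0, z)"]] by simp
    have B_kernel: "y = 0" if "B y = 0" for y
    proof -
      obtain x where "A x = - C y"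
        using \<open>surj A\<close> by (metis surjD)
      then have "upper_tri A C B (x, y) = upper_tri A C B (0, 0)"
        using that clinear_zero[OF \<open>clinear A\<close>] clinear_zero[OF \<open>clinear B\<close>]
          clinear_zero[OF \<open>clinear C\<close>] by simp
      then show "y = 0"
        by (metis S(1) prod.inject)
    qed
    show "inj B"
    proof (rule injI)
      fix y y' assume "B y = B y'"
      then show "y = y'"
        using B_kernel[of "y - y'"] clinear_diff[OF \<open>clinear B\<close>] by simp
    qed
  qed fact+
  ultimately show ?thesis ..
qed

lemma defect_le_nullity_if_invertible_op_upper_tri:
  assumes M: "invertible_op (upper_tri A C B)" and "clinear C"
  shows "defect A \<le> nullity B"
proof -
  obtain S where "bounded_clinear S" and S: "\<And>p. upper_tri A C B (S p) = p"
    using M by (elim invertible_opE) blast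
  define \<phi> where "\<phi> v = snd (S (v, 0))" for v
  have S_parts: "A (fst (S (v, 0))) + C (\<phi> v) = v" "B (\<phi> v) = 0" for v
    using arg_cong[where f = fst, OF S[of "(v, 0)"]] arg_cong[where f = snd, OF S[of "(v, 0)"]]
    by (simp_all add: \<phi>_def)
  have "clinear \<phi>"
    unfolding \<phi>_def[abs_def]
    by (intro bounded_clinear_clinear bounded_clinear_compose[OF bounded_clinear_snd]
        bounded_clinear_compose[OF \<open>bounded_clinear S\<close>] bounded_clinear_Pair_zero)
  have "\<phi> w = 0 \<Longrightarrow> w \<in> range A" for w
    using S_parts(1)[of w] clinear_zero[OF \<open>clinear C\<close>] by (metis add.right_neutral rangeI)
  then show ?thesis
    unfolding defect_def codim_def nullity_def cdim_def
    by (intro dim_mod_le_if_linear_reflects[OF \<open>clinear \<phi>\<close>]) (auto simp: S_parts(2))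
qed

theorem invertible_op_diagonal_iff_upper_tri:
  assumes "bounded_clinear A" "bounded_clinear B" "bounded_clinear C"
  shows "invertible_op A \<and> invertible_op B \<longleftrightarrow>
    invertible_op (upper_tri A C B) \<and>
    \<not> ((0 < defect A \<and> defect A \<le> nullity B) \<or> (0 < nullity B \<and> nullity B \<le> defect A))"
proof
  assume "invertible_op A \<and> invertible_op B"
  then show "invertible_op (upper_tri A C B) \<and> \<not> ((0 < defect A \<and> defect A \<le> nullity B) \<or>
      (0 < nullity B \<and> nullity B \<le> defect A))"
    using assms by (simp add: invertible_op_upper_tri invertible_op_surj invertible_op_inj
        defect_eq_0_if_surj nullity_eq_0_if_inj bounded_clinear_clinear)
next
  assume *: "invertible_op (upper_tri A C B) \<and>
    \<not> ((0 < defect A \<and> defect A \<le> nullity B) \<or> (0 < nullity B \<and> nullity B \<le> defect A))"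
  then have "defect A \<le> nullity B"
    using assms defect_le_nullity_if_invertible_op_upper_tri bounded_clinear_clinear by blast
  with * have "\<not> 0 < defect A"
    by blast
  then have "surj A"
    using assms defect_pos_if_not_surj bounded_clinear_clinear by blast
  then show "invertible_op A \<and> invertible_op B"
    using * assms invertible_op_diagonal_if_surj by blast
qed

lemma scaleC_minus_upper_tri:
  "(\<lambda>p. l *\<^sub>C p - upper_tri D1 C D2 p) =
    upper_tri (\<lambda>x. l *\<^sub>C x - D1 x) (\<lambda>y. - C y) (\<lambda>y. l *\<^sub>C y - D2 y)"
  by (auto simp: upper_tri_def scaleC_prod_def)

theorem mainTheorem16:
  fixes D1 :: "'a::chilbert_space \<Rightarrow> 'a" and D2 :: "'b::chilbert_space \<Rightarrow> 'b"
    and C :: "'b \<Rightarrow> 'a"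
  assumes "cdim (UNIV :: 'a set) = \<infinity>" and "cdim (UNIV :: 'b set) = \<infinity>"
    and "bounded_clinear D1" and "bounded_clinear D2" and "bounded_clinear C"
  shows "spectrum D1 \<union> spectrum D2 =
    spectrum (upper_tri D1 C D2) \<union>
    {l. (0 < defect (\<lambda>x. D1 x - l *\<^sub>C x) \<and>
            defect (\<lambda>x. D1 x - l *\<^sub>C x) \<le> nullity (\<lambda>y. D2 y - l *\<^sub>C y)) \<or>
         (0 < nullity (\<lambda>y. D2 y - l *\<^sub>C y) \<and>
            nullity (\<lambda>y. D2 y - l *\<^sub>C y) \<le> defect (\<lambda>x. D1 x - l *\<^sub>C x))}"
proof (rule set_eqI, goal_cases)
  case (1 l)
  define T1 where "T1 x = l *\<^sub>C x - D1 x" for x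
  define T2 where "T2 y = l *\<^sub>C y - D2 y" for y
  have T1: "bounded_clinear T1" and T2: "bounded_clinear T2"
    unfolding T1_def[abs_def] T2_def[abs_def] using assms(3,4)
    by (simp_all add: bounded_clinear_diff bounded_clinear_scaleC)
  have spectra: "l \<in> spectrum D1 \<longleftrightarrow> \<not> invertible_op T1"
    "l \<in> spectrum D2 \<longleftrightarrow> \<not> invertible_op T2"
    "l \<in> spectrum (upper_tri D1 C D2) \<longleftrightarrow> \<not> invertible_op (upper_tri T1 (\<lambda>y. - C y) T2)"
    by (simp_all add: spectrum_def scaleC_minus_upper_tri T1_def[abs_def] T2_def[abs_def])
  have defect_nullity: "defect (\<lambda>x. D1 x - l *\<^sub>C x) = defect T1"
    "nullity (\<lambda>y. D2 y - l *\<^sub>C y) = nullity T2"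
    using defect_uminus[OF bounded_clinear_clinear[OF T1]] nullity_uminus[of T2]
    by (simp_all add: T1_def T2_def)
  show ?case
    using invertible_op_diagonal_iff_upper_tri[OF T1 T2 bounded_clinear_minus[OF assms(5)]]
    by (simp only: Un_iff mem_Collect_eq spectra defect_nullity) blast
qed

end
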